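(* Let $C$ be an ordered field. The theory $T_{\mathrm{Ham}}$ of independent dense Hamel spaces over $C$ is not strongly dependent. Consequently it is not dp-minimal and does not have finite dp-rank.
   Context: Let $C$ be an ordered field. A $2$-ordered $C$-vector space is a $C$-vector space $G$ with two total orderings $<_0,<_1$ such that $G$ is an ordered $C$-vector space with respect to each of them. Put $G_\infty=G\cup\{\infty\}$, with $G<_0\infty$ and $G<_1\infty$. A Hamel valuation on $G$ is a map $v:G\to G_\infty$ such that for all $x,y\in G$ and $\lambda\in C^{\times}$: $v(x)=\infty$ iff $x=0$; $v(x+y)\ge_0\min_0(v(x),v(y))$; $v(\lambda x)=v(x)$; if $0<_1x<_1y$ then $v(x)\ge_0 v(y)$; $v(v(x))=v(x)$ (with $v(\infty)=\infty$); and $v(x)>_1 0$. A Hamel space over $C$ is such a pair $(G,v)$. It is independent if for all $a_0,b_0,a_1,b_1\in G\cup\{\pm\infty\}$ with $a_0<_0b_0$ and $a_1<_1b_1$ there is $z\in G$ with $a_0<_0z<_0b_0$ and $a_1<_1z<_1b_1$; it is dense if for all $a<_0b$ in $G$ there is $c\in G$ with $a<_0v(c)<_0b$. The language is $\mathcal{L}_{\mathrm{Ham}}=\{0,+,(\lambda_c)_{c\in C},<_0,<_1,v,\infty\}$, a Hamel space being viewed as a structure with universe $G_\infty$, where $\lambda_c$ is scalar multiplication by $c$, and $g+\infty=\infty+g=\infty+\infty=\lambda_c(\infty)=v(\infty)=\infty$. $T_{\mathrm{Ham}}$ is the $\mathcal{L}_{\mathrm{Ham}}$-theory whose models are exactly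 the independent dense Hamel spaces over $C$ (it is complete). Strongly dependent, dp-minimal and finite dp-rank are the standard notions for NIP theories. *)

theory Defs
  imports Main
begin

text \<open>A structure: carrier G (the vector space), operations, two orders, and the
valuation v : G -> G_infty, where G_infty = G + {infty} is modelled by 'u option,
None standing for infty.\<close>

record ('u, 'c) hstruct =
  car  :: "'u set"
  add  :: "'u \<Rightarrow> 'u \<Rightarrow> 'u"
  zer  :: "'u"
  smul :: "'c \<Rightarrow> 'u \<Rightarrow> 'u"
  lt0  :: "'u \<Rightarrow> 'u \<Rightarrow> bool"
  lt1  :: "'u \<Rightarrow> 'u \<Rightarrow> bool"
  val  :: "'u \<Rightarrow> 'u option"

definition Ginf :: "('u, 'c) hstruct \<Rightarrow> 'u option set" where
  "Ginf M = Some ` car M \<union> {None}"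

definition ext_lt :: "('u \<Rightarrow> 'u \<Rightarrow> bool) \<Rightarrow> 'u option \<Rightarrow> 'u option \<Rightarrow> bool" where
  "ext_lt lt a b = (case (a, b) of
      (Some x, Some y) \<Rightarrow> lt x y
    | (Some x, None) \<Rightarrow> True
    | (None, _) \<Rightarrow> False)"

definition ext_le :: "('u \<Rightarrow> 'u \<Rightarrow> bool) \<Rightarrow> 'u option \<Rightarrow> 'u option \<Rightarrow> bool" where
  "ext_le lt a b = (ext_lt lt a b \<or> a = b)"

definition ext_min :: "('u \<Rightarrow> 'u \<Rightarrow> bool) \<Rightarrow> 'u option \<Rightarrow> 'u option \<Rightarrow> 'u option" where
  "ext_min lt a b = (if ext_le lt a b then a else b)"

definition vector_space_on ::
  "'u set \<Rightarrow> ('u \<Rightarrow> 'u \<Rightarrow> 'u) \<Rightarrow> 'u \<Rightarrow> ('c::field \<Rightarrow> 'u \<Rightarrow> 'u) \<Rightarrow> bool" where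
  "vector_space_on G ad z sm \<longleftrightarrow>
     z \<in> G \<and>
     (\<forall>x\<in>G. \<forall>y\<in>G. ad x y \<in> G) \<and>
     (\<forall>c. \<forall>x\<in>G. sm c x \<in> G) \<and>
     (\<forall>x\<in>G. \<forall>y\<in>G. \<forall>w\<in>G. ad (ad x y) w = ad x (ad y w)) \<and>
     (\<forall>x\<in>G. \<forall>y\<in>G. ad x y = ad y x) \<and>
     (\<forall>x\<in>G. ad z x = x) \<and>
     (\<forall>x\<in>G. \<exists>y\<in>G. ad x y = z) \<and>
     (\<forall>c. \<forall>x\<in>G. \<forall>y\<in>G. sm c (ad x y) = ad (sm c x) (sm c y)) \<and>
     (\<forall>c d. \<forall>x\<in>G. sm (c + d) x = ad (sm c x) (sm d x)) \<and>
     (\<forall>c d. \<forall>x\<in>G. sm (c * d) x = sm c (sm d x)) \<and>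
     (\<forall>x\<in>G. sm 1 x = x)"

definition ordered_vs_order ::
  "'u set \<Rightarrow> ('u \<Rightarrow> 'u \<Rightarrow> 'u) \<Rightarrow> 'u \<Rightarrow> ('c::linordered_field \<Rightarrow> 'u \<Rightarrow> 'u)
     \<Rightarrow> ('u \<Rightarrow> 'u \<Rightarrow> bool) \<Rightarrow> bool" where
  "ordered_vs_order G ad z sm lt \<longleftrightarrow>
     (\<forall>x\<in>G. \<not> lt x x) \<and>
     (\<forall>x\<in>G. \<forall>y\<in>G. \<forall>w\<in>G. lt x y \<and> lt y w \<longrightarrow> lt x w) \<and>
     (\<forall>x\<in>G. \<forall>y\<in>G. x \<noteq> y \<longrightarrow> lt x y \<or> lt y x) \<and>
     (\<forall>x\<in>G. \<forall>y\<in>G. \<forall>w\<in>G. lt x y \<longrightarrow> lt (ad x w) (ad y w)) \<and>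
     (\<forall>c. \<forall>x\<in>G. 0 < c \<and> lt z x \<longrightarrow> lt z (sm c x))"

definition two_ordered_vs :: "('u, 'c::linordered_field) hstruct \<Rightarrow> bool" where
  "two_ordered_vs M \<longleftrightarrow>
     vector_space_on (car M) (add M) (zer M) (smul M) \<and>
     ordered_vs_order (car M) (add M) (zer M) (smul M) (lt0 M) \<and>
     ordered_vs_order (car M) (add M) (zer M) (smul M) (lt1 M)"

definition hamel_valuation :: "('u, 'c::linordered_field) hstruct \<Rightarrow> bool" where
  "hamel_valuation M \<longleftrightarrow>
     (\<forall>x\<in>car M. val M x \<in> Ginf M) \<and>
     (\<forall>x\<in>car M. val M x = None \<longleftrightarrow> x = zer M) \<and>
     (\<forall>x\<in>car M. \<forall>y\<in>car M.
        ext_le (lt0 M) (ext_min (lt0 M) (val M x) (val M y)) (val M (add M x y))) \<and>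
     (\<forall>c. \<forall>x\<in>car M. c \<noteq> 0 \<longrightarrow> val M (smul M c x) = val M x) \<and>
     (\<forall>x\<in>car M. \<forall>y\<in>car M. lt1 M (zer M) x \<and> lt1 M x y
        \<longrightarrow> ext_le (lt0 M) (val M y) (val M x)) \<and>
     (\<forall>x\<in>car M. \<forall>g. val M x = Some g \<longrightarrow> val M g = Some g) \<and>
     (\<forall>x\<in>car M. ext_lt (lt1 M) (Some (zer M)) (val M x))"

definition hamel_space :: "('u, 'c::linordered_field) hstruct \<Rightarrow> bool" where
  "hamel_space M \<longleftrightarrow> two_ordered_vs M \<and> hamel_valuation M"

text \<open>lower bounds: None = -infty; upper bounds: None = +infty\<close>
definition above_lo :: "('u \<Rightarrow> 'u \<Rightarrow> bool) \<Rightarrow> 'u option \<Rightarrow> 'u \<Rightarrow> bool" where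
  "above_lo lt lo x = (case lo of None \<Rightarrow> True | Some a \<Rightarrow> lt a x)"

definition below_hi :: "('u \<Rightarrow> 'u \<Rightarrow> bool) \<Rightarrow> 'u option \<Rightarrow> 'u \<Rightarrow> bool" where
  "below_hi lt hi x = (case hi of None \<Rightarrow> True | Some b \<Rightarrow> lt x b)"

definition lo_lt_hi :: "('u \<Rightarrow> 'u \<Rightarrow> bool) \<Rightarrow> 'u option \<Rightarrow> 'u option \<Rightarrow> bool" where
  "lo_lt_hi lt lo hi = (case (lo, hi) of (Some a, Some b) \<Rightarrow> lt a b | _ \<Rightarrow> True)"

definition independent :: "('u, 'c) hstruct \<Rightarrow> bool" where
  "independent M \<longleftrightarrow>
     (\<forall>lo0 hi0 lo1 hi1.
        set_option lo0 \<subseteq> car M \<and> set_option hi0 \<subseteq> car M \<and>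
        set_option lo1 \<subseteq> car M \<and> set_option hi1 \<subseteq> car M \<and>
        lo_lt_hi (lt0 M) lo0 hi0 \<and> lo_lt_hi (lt1 M) lo1 hi1 \<longrightarrow>
        (\<exists>z\<in>car M. above_lo (lt0 M) lo0 z \<and> below_hi (lt0 M) hi0 z \<and>
                   above_lo (lt1 M) lo1 z \<and> below_hi (lt1 M) hi1 z))"

definition dense_hs :: "('u, 'c) hstruct \<Rightarrow> bool" where
  "dense_hs M \<longleftrightarrow>
     (\<forall>a\<in>car M. \<forall>b\<in>car M. lt0 M a b \<longrightarrow>
        (\<exists>c\<in>car M. \<exists>g. val M c = Some g \<and> lt0 M a g \<and> lt0 M g b))"

definition T_Ham_model :: "('u, 'c::linordered_field) hstruct \<Rightarrow> bool" where
  "T_Ham_model M \<longleftrightarrow> hamel_space M \<and> independent M \<and> dense_hs M"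

datatype 'c tm = Var nat | Zero | Infty | Plus "'c tm" "'c tm" | Scal 'c "'c tm" | Vl "'c tm"

datatype 'c fm = Eq "'c tm" "'c tm" | Lt0 "'c tm" "'c tm" | Lt1 "'c tm" "'c tm"
  | FNot "'c fm" | FAnd "'c fm" "'c fm" | FEx nat "'c fm"

fun evalt :: "('u, 'c) hstruct \<Rightarrow> (nat \<Rightarrow> 'u option) \<Rightarrow> 'c tm \<Rightarrow> 'u option" where
  "evalt M e (Var k) = e k"
| "evalt M e Zero = Some (zer M)"
| "evalt M e Infty = None"
| "evalt M e (Plus s t) = (case (evalt M e s, evalt M e t) of
      (Some x, Some y) \<Rightarrow> Some (add M x y) | _ \<Rightarrow> None)"
| "evalt M e (Scal c t) = map_option (smul M c) (evalt M e t)"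
| "evalt M e (Vl t) = (case evalt M e t of Some x \<Rightarrow> val M x | None \<Rightarrow> None)"

fun sat :: "('u, 'c) hstruct \<Rightarrow> (nat \<Rightarrow> 'u option) \<Rightarrow> 'c fm \<Rightarrow> bool" where
  "sat M e (Eq s t) = (evalt M e s = evalt M e t)"
| "sat M e (Lt0 s t) = ext_lt (lt0 M) (evalt M e s) (evalt M e t)"
| "sat M e (Lt1 s t) = ext_lt (lt1 M) (evalt M e s) (evalt M e t)"
| "sat M e (FNot f) = (\<not> sat M e f)"
| "sat M e (FAnd f g) = (sat M e f \<and> sat M e g)"
| "sat M e (FEx k f) = (\<exists>a\<in>Ginf M. sat M (e(k := a)) f)"

text \<open>assignment: object variable x is Var 0 (value b), parameters are Var 1, Var 2, ...\<close>
definition pinst :: "'u option \<Rightarrow> (nat \<Rightarrow> 'u option) \<Rightarrow> nat \<Rightarrow> 'u option" where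
  "pinst b a = (\<lambda>k. if k = 0 then b else a k)"

text \<open>ICT pattern of depth omega in the single variable x, consistency with the complete
theory T_Ham expressed (via compactness) as: every finite n x n part is realised in
every model of T_Ham.\<close>
definition ict_pattern_finite ::
  "('u, 'c) hstruct \<Rightarrow> (nat \<Rightarrow> 'c fm) \<Rightarrow> nat \<Rightarrow> bool" where
  "ict_pattern_finite M \<phi> n \<longleftrightarrow>
     (\<exists>a :: nat \<Rightarrow> nat \<Rightarrow> nat \<Rightarrow> 'u option.
        (\<forall>i j k. a i j k \<in> Ginf M) \<and>
        (\<forall>\<eta> :: nat \<Rightarrow> nat. (\<forall>i<n. \<eta> i < n) \<longrightarrow>
           (\<exists>b\<in>Ginf M. \<forall>i<n. \<forall>j<n. sat M (pinst b (a i j)) (\<phi> i) \<longleftrightarrow> j = \<eta> i)))"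

end

theory Submission
  imports Defs
begin

text \<open>Let \<open>g 0 <\<^sub>0 g 1 <\<^sub>0 \<dots>\<close> be values of \<open>v\<close>, i.e. \<open>v (g k) = g k\<close>; density and
  independence provide such a sequence. By the strict ultrametric inequality, a sum
  \<open>g k\<^sub>0 + \<dots> + g k\<^sub>m\<close> with \<open>k\<^sub>0 < \<dots> < k\<^sub>m\<close> has valuation \<open>g k\<^sub>0\<close>, so \<open>x \<mapsto> x - v x\<close>
  strips off its leading summand. Hence the formula \<open>v (x\<^sub>i) = y\<close>, where \<open>x\<^sub>0 = x\<close> and
  \<open>x\<^sub>k\<^sub>+\<^sub>1 = x\<^sub>k - v x\<^sub>k\<close>, says that the \<open>i\<close>-th summand of \<open>x\<close> is \<open>y\<close>. With parameters
  \<open>g (i * n + j)\<close> and, for a path \<open>\<eta>\<close>, the element \<open>\<Sum>\<^sub>i\<^sub><\<^sub>n g (i * n + \<eta> i)\<close>, these formulas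
  form an ict-pattern of depth \<open>\<omega>\<close> in a single variable.\<close>

lemma vector_space_onD:
  fixes sm :: "'c::field \<Rightarrow> 'u \<Rightarrow> 'u"
  assumes "vector_space_on G ad z sm"
  shows "z \<in> G"
    and "x \<in> G \<Longrightarrow> y \<in> G \<Longrightarrow> ad x y \<in> G"
    and "x \<in> G \<Longrightarrow> sm c x \<in> G"
    and "x \<in> G \<Longrightarrow> y \<in> G \<Longrightarrow> w \<in> G \<Longrightarrow> ad (ad x y) w = ad x (ad y w)"
    and "x \<in> G \<Longrightarrow> y \<in> G \<Longrightarrow> ad x y = ad y x"
    and "x \<in> G \<Longrightarrow> ad z x = x"
    and "x \<in> G \<Longrightarrow> \<exists>y\<in>G. ad x y = z"
    and "x \<in> G \<Longrightarrow> sm (c + d) x = ad (sm c x) (sm d x)"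
    and "x \<in> G \<Longrightarrow> sm 1 x = x"
  using assms unfolding vector_space_on_def by ((elim conjE)?, meson)+

lemma vector_space_on_idem_eq_zero:
  assumes vs: "vector_space_on G ad z (sm :: 'c::field \<Rightarrow> 'u \<Rightarrow> 'u)"
    and x: "x \<in> G" and idem: "ad x x = x"
  shows "x = z"
proof -
  obtain y where y: "y \<in> G" "ad x y = z"
    using vector_space_onD(7)[OF vs x] by blast
  have "z = ad (ad x x) y" using idem y by simp
  also have "\<dots> = ad x z" using vector_space_onD(4)[OF vs x x y(1)] y(2) by simp
  also have "\<dots> = x" using vector_space_onD(1,5,6)[OF vs] x by metis
  finally show ?thesis by simp
qed

lemma vector_space_on_smul_zero:
  assumes vs: "vector_space_on G ad z (sm :: 'c::field \<Rightarrow> 'u \<Rightarrow> 'u)" and x: "x \<in> G"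
  shows "sm 0 x = z"
  using vector_space_on_idem_eq_zero[OF vs] vector_space_onD(3,8)[OF vs x] by (metis add_0)

lemma vector_space_on_add_smul_neg:
  assumes vs: "vector_space_on G ad z (sm :: 'c::field \<Rightarrow> 'u \<Rightarrow> 'u)" and x: "x \<in> G"
  shows "ad x (sm (-1) x) = z"
  using vector_space_onD(8,9)[OF vs x] vector_space_on_smul_zero[OF vs x]
  by (metis add.right_inverse)

lemma vector_space_on_add_diff_cancel:
  assumes vs: "vector_space_on G ad z (sm :: 'c::field \<Rightarrow> 'u \<Rightarrow> 'u)"
    and x: "x \<in> G" and y: "y \<in> G"
  shows "ad (ad x y) (sm (-1) y) = x"
  using vector_space_onD(1,3,4,5,6)[OF vs] vector_space_on_add_smul_neg[OF vs y] x y by metis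

lemma vector_space_on_add_diff_cancel_left:
  assumes vs: "vector_space_on G ad z (sm :: 'c::field \<Rightarrow> 'u \<Rightarrow> 'u)"
    and x: "x \<in> G" and y: "y \<in> G"
  shows "ad (ad x y) (sm (-1) x) = y"
  using vector_space_on_add_diff_cancel[OF vs y x] vector_space_onD(5)[OF vs x y] by simp

lemma hamel_spaceD:
  assumes "hamel_space M"
  shows "vector_space_on (car M) (add M) (zer M) (smul M)"
    and "ordered_vs_order (car M) (add M) (zer M) (smul M) (lt0 M)"
    and "hamel_valuation M"
  using assms unfolding hamel_space_def two_ordered_vs_def by simp_all

lemma mem_Ginf_iff: "a \<in> Ginf M \<longleftrightarrow> set_option a \<subseteq> car M"
  unfolding Ginf_def by (cases a) auto

lemma hamel_valuationD:
  assumes "hamel_valuation M"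
  shows "x \<in> car M \<Longrightarrow> val M x \<in> Ginf M"
    and "x \<in> car M \<Longrightarrow> val M x = None \<longleftrightarrow> x = zer M"
    and "x \<in> car M \<Longrightarrow> y \<in> car M \<Longrightarrow>
           ext_le (lt0 M) (ext_min (lt0 M) (val M x) (val M y)) (val M (add M x y))"
    and "x \<in> car M \<Longrightarrow> c \<noteq> 0 \<Longrightarrow> val M (smul M c x) = val M x"
    and "x \<in> car M \<Longrightarrow> val M x = Some g \<Longrightarrow> val M g = Some g"
proof -
  note H = assms[unfolded hamel_valuation_def]
  show "x \<in> car M \<Longrightarrow> val M x \<in> Ginf M" using H by (elim conjE) blast
  show "x \<in> car M \<Longrightarrow> val M x = None \<longleftrightarrow> x = zer M"
    using H[THEN conjunct2, THEN conjunct1] by simp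
  show "x \<in> car M \<Longrightarrow> y \<in> car M \<Longrightarrow>
      ext_le (lt0 M) (ext_min (lt0 M) (val M x) (val M y)) (val M (add M x y))"
    using H by (elim conjE) blast
  show "x \<in> car M \<Longrightarrow> c \<noteq> 0 \<Longrightarrow> val M (smul M c x) = val M x"
    using H by (elim conjE) blast
  show "x \<in> car M \<Longrightarrow> val M x = Some g \<Longrightarrow> val M g = Some g"
    using H by (elim conjE) blast
qed

lemma ordered_vs_orderD:
  assumes "ordered_vs_order G ad z sm lt"
  shows "x \<in> G \<Longrightarrow> \<not> lt x x"
    and "x \<in> G \<Longrightarrow> y \<in> G \<Longrightarrow> w \<in> G \<Longrightarrow> lt x y \<Longrightarrow> lt y w \<Longrightarrow> lt x w"
  using assms unfolding ordered_vs_order_def by (elim conjE; blast)+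

lemma ext_lt_not_le:
  assumes ord: "ordered_vs_order G ad z sm lt"
    and "set_option a \<subseteq> G" "set_option b \<subseteq> G" and ab: "ext_lt lt a b"
  shows "\<not> ext_le lt b a"
proof (cases a)
  case None
  then show ?thesis using ab by (simp add: ext_lt_def)
next
  case (Some p)
  show ?thesis
  proof (cases b)
    case None
    then show ?thesis using Some by (simp add: ext_le_def ext_lt_def)
  next
    case (Some q)
    have "p \<in> G" "q \<in> G" "lt p q" using assms \<open>a = Some p\<close> Some by (simp_all add: ext_lt_def)
    then have "\<not> lt q p" "q \<noteq> p" using ordered_vs_orderD[OF ord] by blast+
    then show ?thesis using \<open>a = Some p\<close> Some by (simp add: ext_le_def ext_lt_def)
  qed
qed

lemma val_add_eq_left:
  assumes H: "hamel_space M" and x: "x \<in> car M" and y: "y \<in> car M"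
    and lt: "ext_lt (lt0 M) (val M x) (val M y)"
  shows "val M (add M x y) = val M x"
proof (rule ccontr)
  note vs = hamel_spaceD(1)[OF H] and hv = hamel_spaceD(3)[OF H]
  let ?s = "add M x y" and ?lt = "ext_lt (lt0 M)" and ?le = "ext_le (lt0 M)"
    and ?min = "ext_min (lt0 M)"
  have s: "?s \<in> car M" using vector_space_onD(2)[OF vs x y] .
  have in_car: "set_option (val M u) \<subseteq> car M" if "u \<in> car M" for u
    using hamel_valuationD(1)[OF hv that] unfolding mem_Ginf_iff .
  assume ne: "val M ?s \<noteq> val M x"
  have "?le (val M x) (val M ?s)"
    using hamel_valuationD(3)[OF hv x y] lt by (simp add: ext_min_def ext_le_def)
  then have "?lt (val M x) (?min (val M ?s) (val M y))"
    using ne lt by (simp add: ext_le_def ext_min_def)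
  moreover have "?le (?min (val M ?s) (val M y)) (val M x)"
    \<comment> \<open>ultrametric inequality for \<open>x = (x + y) + (-1) y\<close>\<close>
    using hamel_valuationD(3)[OF hv s vector_space_onD(3)[OF vs y, of "-1"]]
      hamel_valuationD(4)[OF hv y, of "-1"] vector_space_on_add_diff_cancel[OF vs x y]
    by simp
  moreover have "set_option (?min (val M ?s) (val M y)) \<subseteq> car M"
    using in_car[OF s] in_car[OF y] by (simp add: ext_min_def)
  ultimately show False using ext_lt_not_le[OF hamel_spaceD(2)[OF H] in_car[OF x]] by blast
qed

lemma val_zero:
  assumes H: "hamel_space M"
  shows "val M (zer M) = None"
  using hamel_valuationD(2)[OF hamel_spaceD(3)[OF H] vector_space_onD(1)[OF hamel_spaceD(1)[OF H]]]
  by simp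

fun vsum :: "('u, 'c) hstruct \<Rightarrow> 'u list \<Rightarrow> 'u" where
  "vsum M [] = zer M"
| "vsum M (x # xs) = add M x (vsum M xs)"

lemma vsum_in_car:
  assumes vs: "vector_space_on (car M) (add M) (zer M) (smul M :: 'c::field \<Rightarrow> 'u \<Rightarrow> 'u)"
  shows "set xs \<subseteq> car M \<Longrightarrow> vsum M xs \<in> car M"
  by (induction xs) (simp_all add: vector_space_onD(1,2)[OF vs])

definition val_chain :: "('u, 'c) hstruct \<Rightarrow> 'u list \<Rightarrow> bool" where
  "val_chain M xs \<longleftrightarrow>
     set xs \<subseteq> car M \<and> (\<forall>x\<in>set xs. val M x = Some x) \<and> sorted_wrt (lt0 M) xs"

lemma val_chain_drop: "val_chain M xs \<Longrightarrow> val_chain M (drop i xs)"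
  unfolding val_chain_def by (meson in_set_dropD set_drop_subset sorted_wrt_drop subset_trans)

lemma val_vsum:
  assumes H: "hamel_space M"
  shows "val_chain M xs \<Longrightarrow> xs \<noteq> [] \<Longrightarrow> val M (vsum M xs) = Some (hd xs)"
proof (induction xs)
  case Nil
  then show ?case by simp
next
  case (Cons x xs)
  note vs = hamel_spaceD(1)[OF H]
  have x: "x \<in> car M" "val M x = Some x" and tail: "val_chain M xs"
    using Cons.prems(1) unfolding val_chain_def by auto
  have "ext_lt (lt0 M) (Some x) (val M (vsum M xs))"
  proof (cases xs)
    case Nil
    then show ?thesis using val_zero[OF H] by (simp add: ext_lt_def)
  next
    case (Cons y ys)
    then have "lt0 M x y" using Cons.prems(1) unfolding val_chain_def by simp
    then show ?thesis using Cons.IH[OF tail] Cons by (simp add: ext_lt_def)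
  qed
  moreover have "vsum M xs \<in> car M" using vsum_in_car[OF vs] tail unfolding val_chain_def by blast
  ultimately show ?case using val_add_eq_left[OF H x(1)] x(2) by simp
qed

text \<open>Evaluated at the sum of a \<open>val_chain\<close>, \<open>strip_tm k\<close> removes the first \<open>k\<close> summands:
  each step subtracts the valuation, which is the leading summand.\<close>
fun strip_tm :: "nat \<Rightarrow> 'c::ring_1 tm" where
  "strip_tm 0 = Var 0"
| "strip_tm (Suc k) = Plus (strip_tm k) (Scal (-1) (Vl (strip_tm k)))"

definition strip_pattern :: "nat \<Rightarrow> 'c::ring_1 fm" where
  "strip_pattern i = Eq (Vl (strip_tm i)) (Var 1)"

lemma evalt_strip_tm:
  assumes H: "hamel_space (M :: ('u, 'c::linordered_field) hstruct)"
    and chain: "val_chain M xs" and e: "e 0 = Some (vsum M xs)"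
  shows "i \<le> length xs \<Longrightarrow> evalt M e (strip_tm i) = Some (vsum M (drop i xs))"
proof (induction i)
  case 0
  then show ?case using e by simp
next
  case (Suc i)
  note vs = hamel_spaceD(1)[OF H]
  have drop_i: "drop i xs = xs ! i # drop (Suc i) xs"
    using Suc.prems by (simp add: Cons_nth_drop_Suc)
  have "val M (vsum M (drop i xs)) = Some (xs ! i)"
    using val_vsum[OF H val_chain_drop[OF chain, of i]] Suc.prems by (simp add: hd_drop_conv_nth)
  then have "evalt M e (strip_tm (Suc i)) =
      Some (add M (vsum M (drop i xs)) (smul M (-1) (xs ! i)))"
    using Suc by simp
  moreover have "xs ! i \<in> car M" "vsum M (drop (Suc i) xs) \<in> car M"
    using chain Suc.prems vsum_in_car[OF vs] val_chain_drop[OF chain, of "Suc i"]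
    unfolding val_chain_def by auto
  ultimately show ?case
    using vector_space_on_add_diff_cancel_left[OF vs] drop_i by simp
qed

lemma sat_strip_pattern:
  assumes H: "hamel_space (M :: ('u, 'c::linordered_field) hstruct)"
    and chain: "val_chain M xs" and i: "i < length xs"
  shows "sat M (pinst (Some (vsum M xs)) a) (strip_pattern i) \<longleftrightarrow> a 1 = Some (xs ! i)"
proof -
  have "evalt M (pinst (Some (vsum M xs)) a) (strip_tm i) = Some (vsum M (drop i xs))"
    using evalt_strip_tm[OF H chain] i by (simp add: pinst_def)
  moreover have "val M (vsum M (drop i xs)) = Some (xs ! i)"
    using val_vsum[OF H val_chain_drop[OF chain]] i by (simp add: hd_drop_conv_nth)
  ultimately show ?thesis by (auto simp: strip_pattern_def pinst_def)
qed

lemma ict_pattern_finite_strip_pattern: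
  fixes g :: "nat \<Rightarrow> 'u"
  assumes H: "hamel_space (M :: ('u, 'c::linordered_field) hstruct)"
    and g: "\<forall>k. g k \<in> car M \<and> val M (g k) = Some (g k)"
    and incr: "\<forall>m k. m < k \<longrightarrow> lt0 M (g m) (g k)"
  shows "ict_pattern_finite M strip_pattern n"
  unfolding ict_pattern_finite_def
proof (intro exI[of _ "\<lambda>i j _. Some (g (i * n + j))"] conjI allI impI)
  fix i j k
  show "Some (g (i * n + j)) \<in> Ginf M" using g by (simp add: Ginf_def)
next
  fix \<eta> :: "nat \<Rightarrow> nat"
  assume \<eta>: "\<forall>i<n. \<eta> i < n"
  have "inj g"
  proof (rule linorder_injI)
    fix m k :: nat
    assume "m < k"
    then have "lt0 M (g m) (g k)" using incr by blast
    moreover have "\<not> lt0 M (g k) (g k)"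
      using g ordered_vs_orderD(1)[OF hamel_spaceD(2)[OF H]] by blast
    ultimately show "g m \<noteq> g k" by auto
  qed
  define xs where "xs = map (\<lambda>i. g (i * n + \<eta> i)) [0..<n]"
  have index_mono: "i * n + \<eta> i < j * n + \<eta> j" if "i < j" "j < n" for i j
  proof -
    have "i * n + \<eta> i < Suc i * n" using \<eta> that by simp
    also have "\<dots> \<le> j * n" using that by (intro mult_le_mono1) simp
    finally show ?thesis by simp
  qed
  have "sorted_wrt (lt0 M) xs"
    unfolding xs_def sorted_wrt_map
    by (rule sorted_wrt_mono_rel[OF _ sorted_wrt_upt]) (use incr index_mono in auto)
  then have chain: "val_chain M xs"
    using g unfolding val_chain_def xs_def by auto
  show "\<exists>b\<in>Ginf M. \<forall>i<n. \<forall>j<n.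
          sat M (pinst b (\<lambda>_. Some (g (i * n + j)))) (strip_pattern i) \<longleftrightarrow> j = \<eta> i"
  proof (intro bexI[of _ "Some (vsum M xs)"] allI impI)
    fix i j
    assume "i < n" "j < n"
    then have "sat M (pinst (Some (vsum M xs)) (\<lambda>_. Some (g (i * n + j)))) (strip_pattern i)
        \<longleftrightarrow> g (i * n + j) = g (i * n + \<eta> i)"
      using sat_strip_pattern[OF H chain] by (simp add: xs_def)
    also have "\<dots> \<longleftrightarrow> j = \<eta> i" using \<open>inj g\<close> by (auto dest: injD)
    finally show "sat M (pinst (Some (vsum M xs)) (\<lambda>_. Some (g (i * n + j)))) (strip_pattern i)
        \<longleftrightarrow> j = \<eta> i" .
  next
    show "Some (vsum M xs) \<in> Ginf M"
      using vsum_in_car[OF hamel_spaceD(1)[OF H]] chain unfolding val_chain_def Ginf_def by blast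
  qed
qed

lemma T_Ham_model_val_above:
  assumes T: "T_Ham_model M" and a: "a \<in> car M"
  shows "\<exists>\<gamma>. \<gamma> \<in> car M \<and> val M \<gamma> = Some \<gamma> \<and> lt0 M a \<gamma>"
proof -
  have "independent M" and "dense_hs M" and hv: "hamel_valuation M"
    using T unfolding T_Ham_model_def hamel_space_def by simp_all
  obtain z where z: "z \<in> car M" "lt0 M a z"
    using \<open>independent M\<close>[unfolded independent_def, rule_format, of "Some a" None None None] a
    by (auto simp: lo_lt_hi_def above_lo_def below_hi_def)
  then obtain c \<gamma> where c: "c \<in> car M" "val M c = Some \<gamma>" "lt0 M a \<gamma>"
    using \<open>dense_hs M\<close> a unfolding dense_hs_def by blast
  then have "\<gamma> \<in> car M" "val M \<gamma> = Some \<gamma>"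
    using hamel_valuationD(1)[OF hv c(1)] hamel_valuationD(5)[OF hv c(1,2)]
    by (auto simp: c(2) mem_Ginf_iff)
  with c show ?thesis by blast
qed

lemma T_Ham_model_val_sequence:
  fixes M :: "('u, 'c::linordered_field) hstruct"
  assumes T: "T_Ham_model M"
  obtains g :: "nat \<Rightarrow> 'u" where "\<forall>k. g k \<in> car M \<and> val M (g k) = Some (g k)"
    and "\<forall>m k. m < k \<longrightarrow> lt0 M (g m) (g k)"
proof -
  have H: "hamel_space M" using T unfolding T_Ham_model_def by simp
  define P where "P = (\<lambda>(_ :: nat) \<gamma>. \<gamma> \<in> car M \<and> val M \<gamma> = Some \<gamma>)"
  have start: "\<exists>\<gamma>. P 0 \<gamma>"
    using T_Ham_model_val_above[OF T vector_space_onD(1)[OF hamel_spaceD(1)[OF H]]]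
    unfolding P_def by blast
  have step: "\<exists>\<delta>. P (Suc k) \<delta> \<and> lt0 M \<gamma> \<delta>" if "P k \<gamma>" for k \<gamma>
    using T_Ham_model_val_above[OF T] that unfolding P_def by blast
  obtain g where g: "\<forall>k. P k (g k) \<and> lt0 M (g k) (g (Suc k))"
    using dependent_nat_choice[of P "\<lambda>_. lt0 M", OF start step] by blast
  then have car: "g k \<in> car M" for k unfolding P_def by simp
  have "\<forall>k. g k \<in> car M \<and> val M (g k) = Some (g k)" using g unfolding P_def by simp
  moreover have "\<forall>m k. m < k \<longrightarrow> lt0 M (g m) (g k)"
  proof (intro allI impI)
    fix m k :: nat
    assume "m < k"
    then show "lt0 M (g m) (g k)"
    proof (induction rule: less_Suc_induct)
      case (1 i)
      show ?case using g by simp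
    next
      case (2 i j k)
      from \<open>lt0 M (g i) (g j)\<close> \<open>lt0 M (g j) (g k)\<close> show ?case
        by (rule ordered_vs_orderD(2)[OF hamel_spaceD(2)[OF H] car car car])
    qed
  qed
  ultimately show ?thesis by (rule that)
qed

theorem theorem7p1:
  shows "\<exists>\<phi> :: nat \<Rightarrow> ('c::linordered_field) fm.
           \<forall>M :: ('u, 'c) hstruct. T_Ham_model M \<longrightarrow> (\<forall>n. ict_pattern_finite M \<phi> n)"
proof (intro exI[of _ strip_pattern] allI impI)
  fix M :: "('u, 'c) hstruct" and n :: nat
  assume T: "T_Ham_model M"
  obtain g :: "nat \<Rightarrow> 'u" where fixed: "\<forall>k. g k \<in> car M \<and> val M (g k) = Some (g k)"
    and incr: "\<forall>m k. m < k \<longrightarrow> lt0 M (g m) (g k)"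
    by (rule T_Ham_model_val_sequence[OF T])
  have "hamel_space M" using T unfolding T_Ham_model_def by simp
  from this fixed incr show "ict_pattern_finite M strip_pattern n"
    by (rule ict_pattern_finite_strip_pattern)
qed

end
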